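(* Let $X$ be a finite $s$-regular graph with vertex set $X^0$ and let $\lambda_2$ be the second largest eigenvalue of its adjacency matrix. Let $0<\alpha$, let $S\subset X^0$ with $|S|\le\alpha|X^0|$, let $0<b\le s$, and let $$A=\{v\in S : |(\delta S)_v|\ge s-b\},$$ where $(\delta S)_v=\delta S\cap\delta v$. Put $\beta=\big((b-\lambda_2)-\alpha(s-\lambda_2)\big)b^{-1}$. Then $|A|\ge\beta|S|$.
   Context: For a vertex $v$, $\delta v$ is the set of edges incident to $v$. For $S\subset X^0$, $\delta S$ denotes the set of edges with one endpoint in $S$ and the other in $X^0\setminus S$. *)

theory Defs
  imports "Jordan_Normal_Form.Char_Poly" "HOL-Library.Multiset"
begin

definition simple_graph :: "nat \<Rightarrow> (nat \<Rightarrow> nat \<Rightarrow> bool) \<Rightarrow> bool" where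
  "simple_graph n E \<longleftrightarrow> (\<forall>u v. E u v \<longrightarrow> u < n \<and> v < n) \<and>
                          (\<forall>u v. E u v \<longrightarrow> E v u) \<and> (\<forall>v. \<not> E v v)"

definition regular_graph :: "nat \<Rightarrow> (nat \<Rightarrow> nat \<Rightarrow> bool) \<Rightarrow> nat \<Rightarrow> bool" where
  "regular_graph n E s \<longleftrightarrow> simple_graph n E \<and> (\<forall>v<n. card {w. w < n \<and> E v w} = s)"

definition graph_edges :: "nat \<Rightarrow> (nat \<Rightarrow> nat \<Rightarrow> bool) \<Rightarrow> nat set set" where
  "graph_edges n E = {{u, w} | u w. u < n \<and> w < n \<and> E u w}"

definition delta_vertex :: "nat \<Rightarrow> (nat \<Rightarrow> nat \<Rightarrow> bool) \<Rightarrow> nat \<Rightarrow> nat set set" where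
  "delta_vertex n E v = {e \<in> graph_edges n E. v \<in> e}"

definition delta_set :: "nat \<Rightarrow> (nat \<Rightarrow> nat \<Rightarrow> bool) \<Rightarrow> nat set \<Rightarrow> nat set set" where
  "delta_set n E S = {e \<in> graph_edges n E. \<exists>u w. e = {u, w} \<and> u \<in> S \<and> w \<in> {0..<n} - S}"

definition adj_matrix :: "nat \<Rightarrow> (nat \<Rightarrow> nat \<Rightarrow> bool) \<Rightarrow> real mat" where
  "adj_matrix n E = mat n n (\<lambda>(i, j). if E i j then 1 else 0)"

(* eigenvalues of the adjacency matrix (with multiplicity), in non-increasing order;
   they are the roots of the characteristic polynomial (all real, since the matrix is symmetric) *)
definition adj_eigenvalues_desc :: "nat \<Rightarrow> (nat \<Rightarrow> nat \<Rightarrow> bool) \<Rightarrow> real list" where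
  "adj_eigenvalues_desc n E = rev (sorted_list_of_multiset (proots (char_poly (adj_matrix n E))))"

definition lambda2 :: "nat \<Rightarrow> (nat \<Rightarrow> nat \<Rightarrow> bool) \<Rightarrow> real" where
  "lambda2 n E = adj_eigenvalues_desc n E ! 1"

end

theory Submission
  imports Defs
begin

text \<open>Write \<open>d(v)\<close> for the number of neighbours of \<open>v \<in> S\<close> outside \<open>S\<close>, so that
  \<open>(\<Sum>v\<in>S. d(v)) = |\<delta>S|\<close>. Vertices outside \<open>A\<close> have \<open>d(v) < s - b\<close> and all have \<open>d(v) \<le> s\<close>,
  hence \<open>|\<delta>S| \<le> (s - b)|S| + b|A|\<close>. On the other hand the centred indicator \<open>y = 1\<^sub>S - |S|/n\<close>
  is orthogonal to the constant eigenvector, so \<open>y\<^sup>TAy \<le> \<lambda>\<^sub>2 |y|\<^sup>2\<close>; evaluating both sides gives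
  \<open>|\<delta>S| \<ge> (s - \<lambda>\<^sub>2)|S|(1 - |S|/n) \<ge> (s - \<lambda>\<^sub>2)(1 - \<alpha>)|S|\<close>, and comparing the two bounds is the claim.

  Since \<open>\<lambda>\<^sub>2\<close> is defined through the roots of the characteristic polynomial, the Rayleigh
  bound rests on two facts: the supremum of a Rayleigh quotient of a symmetric matrix is
  a root of its characteristic polynomial, and subtracting \<open>(s - t)/n\<close> from every entry of \<open>A\<close>
  replaces the root \<open>s\<close> by \<open>t\<close> without changing the quadratic form on \<open>\<Sum> y = 0\<close>.\<close>

section \<open>Quadratic forms and Rayleigh quotients\<close>

definition bilin_form :: "nat \<Rightarrow> (nat \<Rightarrow> nat \<Rightarrow> real) \<Rightarrow> (nat \<Rightarrow> real) \<Rightarrow> (nat \<Rightarrow> real) \<Rightarrow> real" where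
  "bilin_form n F u v = (\<Sum>i<n. \<Sum>j<n. u i * F i j * v j)"

abbreviation quad_form :: "nat \<Rightarrow> (nat \<Rightarrow> nat \<Rightarrow> real) \<Rightarrow> (nat \<Rightarrow> real) \<Rightarrow> real" where
  "quad_form n F y \<equiv> bilin_form n F y y"

definition sq_norm :: "nat \<Rightarrow> (nat \<Rightarrow> real) \<Rightarrow> real" where
  "sq_norm n y = (\<Sum>i<n. (y i)\<^sup>2)"

lemma sq_norm_nonneg: "0 \<le> sq_norm n y"
  unfolding sq_norm_def by (intro sum_nonneg) auto

lemma sq_norm_ge_component: "i < n \<Longrightarrow> (y i)\<^sup>2 \<le> sq_norm n y"
  unfolding sq_norm_def by (rule member_le_sum) auto

lemma abs_mult_le_sq_norm:
  assumes "i < n" "j < n"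
  shows "\<bar>y i * y j\<bar> \<le> sq_norm n y"
proof -
  have "2 * \<bar>y i * y j\<bar> \<le> (y i)\<^sup>2 + (y j)\<^sup>2"
    using sum_squares_bound[of "\<bar>y i\<bar>" "\<bar>y j\<bar>"] by (simp add: abs_mult)
  with sq_norm_ge_component[of i n y] sq_norm_ge_component[of j n y] assms show ?thesis
    by linarith
qed

lemma abs_quad_form_le: "\<bar>quad_form n F y\<bar> \<le> (\<Sum>i<n. \<Sum>j<n. \<bar>F i j\<bar>) * sq_norm n y"
proof -
  have "\<bar>quad_form n F y\<bar> \<le> (\<Sum>i<n. \<Sum>j<n. \<bar>y i * F i j * y j\<bar>)"
    unfolding bilin_form_def by (rule order_trans[OF sum_abs sum_mono[OF sum_abs]])
  also have "\<dots> \<le> (\<Sum>i<n. \<Sum>j<n. \<bar>F i j\<bar> * sq_norm n y)"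
  proof (intro sum_mono)
    fix i j assume "i \<in> {..<n}" "j \<in> {..<n}"
    then have "\<bar>F i j\<bar> * \<bar>y i * y j\<bar> \<le> \<bar>F i j\<bar> * sq_norm n y"
      by (intro mult_left_mono abs_mult_le_sq_norm) auto
    then show "\<bar>y i * F i j * y j\<bar> \<le> \<bar>F i j\<bar> * sq_norm n y"
      by (simp add: abs_mult mult_ac)
  qed
  finally show ?thesis by (simp add: sum_distrib_right)
qed

lemma sq_le_mult_if_quadratic_nonneg:
  fixes a b c :: real
  assumes nonneg: "\<And>r. 0 \<le> a + 2 * r * b + r\<^sup>2 * c" and "0 \<le> c"
  shows "b\<^sup>2 \<le> a * c"
proof (cases "c = 0")
  case True
  have "b = 0"
  proof (rule ccontr)
    assume "b \<noteq> 0"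
    with True nonneg[of "- (a + 1) / (2 * b)"] show False by (simp add: field_simps)
  qed
  with True show ?thesis by simp
next
  case False
  with assms have "0 \<le> a - b\<^sup>2 / c" "c > 0"
    using nonneg[of "- b / c"] by (auto simp: field_simps power2_eq_square)
  then show ?thesis by (simp add: field_simps)
qed

lemma bilin_form_commute:
  assumes "\<And>i j. i < n \<Longrightarrow> j < n \<Longrightarrow> M i j = M j i"
  shows "bilin_form n M v u = bilin_form n M u v"
  unfolding bilin_form_def
  by (subst sum.swap) (auto intro!: sum.cong simp: assms mult.commute mult.left_commute)

lemma bilin_form_diff: "bilin_form n (\<lambda>i j. A i j - B i j) u v = bilin_form n A u v - bilin_form n B u v"
  unfolding bilin_form_def by (simp add: algebra_simps sum_subtractf)

lemma quad_form_diag: "quad_form n (\<lambda>i j. if i = j then L else 0) y = L * sq_norm n y"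
proof -
  have "quad_form n (\<lambda>i j. if i = j then L else 0) y = (\<Sum>i<n. \<Sum>j<n. if i = j then y i * L * y j else 0)"
    unfolding bilin_form_def by (intro sum.cong refl) auto
  then show ?thesis
    unfolding sq_norm_def by (simp add: sum_distrib_left power2_eq_square algebra_simps)
qed

lemma cauchy_schwarz_psd:
  assumes sym: "\<And>i j. i < n \<Longrightarrow> j < n \<Longrightarrow> M i j = M j i"
    and psd: "\<And>y. 0 \<le> quad_form n M y"
  shows "(bilin_form n M u v)\<^sup>2 \<le> quad_form n M u * quad_form n M v"
proof (rule sq_le_mult_if_quadratic_nonneg[OF _ psd])
  fix r
  have "quad_form n M (\<lambda>i. u i + r * v i)
      = quad_form n M u + r * bilin_form n M v u + r * bilin_form n M u v + r\<^sup>2 * quad_form n M v"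
    unfolding bilin_form_def by (simp add: algebra_simps sum.distrib sum_distrib_left power2_eq_square)
  with psd[of "\<lambda>i. u i + r * v i"] bilin_form_commute[OF sym, where u = u and v = v]
  show "0 \<le> quad_form n M u + 2 * r * bilin_form n M u v + r\<^sup>2 * quad_form n M v"
    by simp
qed

lemma right_inverse_of_det_nonzero:
  assumes "det (mat n n (\<lambda>(i, j). M i j)) \<noteq> (0 :: real)"
  obtains N where "N \<in> carrier_mat n n" "\<And>i k. i < n \<Longrightarrow> k < n \<Longrightarrow> (\<Sum>j<n. M i j * N $$ (j, k)) = of_bool (i = k)"
proof -
  have "mat n n (\<lambda>(i, j). M i j) \<in> Units (ring_mat TYPE(real) n ())"
    by (rule det_non_zero_imp_unit[OF _ assms]) auto
  then obtain N where N: "N \<in> carrier_mat n n" "mat n n (\<lambda>(i, j). M i j) * N = 1\<^sub>m n"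
    unfolding Units_def ring_mat_def by auto
  have "(\<Sum>j<n. M i j * N $$ (j, k)) = of_bool (i = k)" if "i < n" "k < n" for i k
    using arg_cong[OF N(2), of "\<lambda>X. X $$ (i, k)"] N(1) that
    by (simp add: scalar_prod_def lessThan_atLeast0)
  with N(1) show ?thesis by (rule that)
qed

text \<open>If \<open>M u = y\<close>, Cauchy--Schwarz gives \<open>|y|\<^sup>4 = (u\<^sup>TMy)\<^sup>2 \<le> (u\<^sup>TMu)(y\<^sup>TMy)\<close>, and
  \<open>u\<^sup>TMu = y\<^sup>TNy\<close> is bounded by \<open>|y|\<^sup>2\<close> times the entry sum of the inverse \<open>N\<close>.\<close>

lemma psd_nonsingular_coercive:
  assumes sym: "\<And>i j. i < n \<Longrightarrow> j < n \<Longrightarrow> M i j = M j i"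
    and psd: "\<And>y. 0 \<le> quad_form n M y"
    and nonsingular: "det (mat n n (\<lambda>(i, j). M i j)) \<noteq> 0"
  obtains K where "K > 0" "\<And>y. sq_norm n y \<le> K * quad_form n M y"
proof -
  obtain N where N: "N \<in> carrier_mat n n"
    and MN: "\<And>i k. i < n \<Longrightarrow> k < n \<Longrightarrow> (\<Sum>j<n. M i j * N $$ (j, k)) = of_bool (i = k)"
    using right_inverse_of_det_nonzero[OF nonsingular] by blast
  define K where "K = (\<Sum>i<n. \<Sum>k<n. \<bar>N $$ (i, k)\<bar>) + 1"
  have "0 \<le> (\<Sum>i<n. \<Sum>k<n. \<bar>N $$ (i, k)\<bar>)" by (intro sum_nonneg) auto
  then have "K > 0" unfolding K_def by linarith
  moreover have "sq_norm n y \<le> K * quad_form n M y" for y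
  proof -
    define u where "u i = (\<Sum>k<n. N $$ (i, k) * y k)" for i
    have Mu: "(\<Sum>j<n. M i j * u j) = y i" if "i < n" for i
    proof -
      have "(\<Sum>j<n. M i j * u j) = (\<Sum>k<n. (\<Sum>j<n. M i j * N $$ (j, k)) * y k)"
        unfolding u_def sum_distrib_left sum_distrib_right
        by (subst sum.swap) (simp add: mult.assoc)
      also have "\<dots> = y i" using MN that by simp
      finally show ?thesis .
    qed
    have Mu_right: "bilin_form n M w u = (\<Sum>i<n. w i * y i)" for w
    proof -
      have "bilin_form n M w u = (\<Sum>i<n. w i * (\<Sum>j<n. M i j * u j))"
        unfolding bilin_form_def by (simp add: sum_distrib_left mult.assoc)
      then show ?thesis by (simp add: Mu)
    qed
    have uy: "bilin_form n M u y = sq_norm n y"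
      using bilin_form_commute[OF sym, where u = u and v = y] Mu_right[of y] by (simp add: sq_norm_def power2_eq_square)
    have "quad_form n M u = (\<Sum>i<n. \<Sum>k<n. y i * N $$ (i, k) * y k)"
      unfolding Mu_right u_def by (simp add: sum_distrib_left mult_ac)
    then have uu: "quad_form n M u = quad_form n (\<lambda>i k. N $$ (i, k)) y"
      by (simp add: bilin_form_def)
    have "(sq_norm n y)\<^sup>2 \<le> quad_form n M u * quad_form n M y"
      using cauchy_schwarz_psd[OF sym psd, of u y] uy by simp
    also have "\<dots> \<le> (K * sq_norm n y) * quad_form n M y"
    proof (intro mult_right_mono[OF _ psd])
      have "quad_form n M u \<le> (\<Sum>i<n. \<Sum>k<n. \<bar>N $$ (i, k)\<bar>) * sq_norm n y"
        using abs_quad_form_le[of n "\<lambda>i k. N $$ (i, k)" y] unfolding uu by linarith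
      then show "quad_form n M u \<le> K * sq_norm n y"
        using sq_norm_nonneg[of n y] unfolding K_def by (simp add: algebra_simps)
    qed
    finally have "sq_norm n y * sq_norm n y \<le> sq_norm n y * (K * quad_form n M y)"
      by (simp add: power2_eq_square mult_ac)
    moreover have "0 \<le> K * quad_form n M y"
      using \<open>K > 0\<close> psd[of y] by simp
    ultimately show ?thesis
      using sq_norm_nonneg[of n y] by (cases "sq_norm n y = 0") auto
  qed
  ultimately show ?thesis by (rule that)
qed

text \<open>The supremum \<open>L\<close> of the Rayleigh quotient is an eigenvalue: otherwise \<open>L I - F\<close> would be
  positive semidefinite and nonsingular, hence coercive, and \<open>L\<close> could be lowered.\<close>

lemma eigenvalue_gt_of_quad_form_gt:
  assumes sym: "\<And>i j. i < n \<Longrightarrow> j < n \<Longrightarrow> F i j = F j i"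
    and x: "quad_form n F x > t * sq_norm n x"
  shows "\<exists>\<mu>>t. det (mat n n (\<lambda>(i, j). (if i = j then \<mu> else 0) - F i j)) = 0"
proof -
  define R where "R = {quad_form n F y / sq_norm n y | y. sq_norm n y \<noteq> 0}"
  define L where "L = Sup R"
  have quad_form_zero: "quad_form n F y = 0" if "sq_norm n y = 0" for y
    using abs_quad_form_le[of n F y] that by simp
  have x0: "sq_norm n x > 0"
  proof (rule ccontr)
    assume "\<not> sq_norm n x > 0"
    with sq_norm_nonneg[of n x] have "sq_norm n x = 0" by linarith
    with x quad_form_zero[of x] show False by simp
  qed
  have bdd: "bdd_above R"
  proof (rule bdd_aboveI)
    fix q assume "q \<in> R"
    then obtain y where "q = quad_form n F y / sq_norm n y" "sq_norm n y \<noteq> 0"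
      unfolding R_def by blast
    with abs_quad_form_le[of n F y] sq_norm_nonneg[of n y]
    show "q \<le> (\<Sum>i<n. \<Sum>j<n. \<bar>F i j\<bar>)" by (simp add: divide_le_eq)
  qed
  have le_L: "quad_form n F y \<le> L * sq_norm n y" for y
  proof (cases "sq_norm n y = 0")
    case False
    then have "quad_form n F y / sq_norm n y \<le> L"
      unfolding L_def R_def using bdd by (intro cSup_upper) (auto simp: R_def)
    with False sq_norm_nonneg[of n y] show ?thesis by (simp add: divide_le_eq)
  qed (simp add: quad_form_zero)
  have "t < quad_form n F x / sq_norm n x" using x x0 by (simp add: less_divide_eq)
  also have "\<dots> \<le> L"
    unfolding L_def using bdd x0 by (intro cSup_upper) (auto simp: R_def)
  finally have "t < L" .
  define M where "M i j = (if i = j then L else 0) - F i j" for i j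
  have symM: "\<And>i j. i < n \<Longrightarrow> j < n \<Longrightarrow> M i j = M j i" unfolding M_def using sym by auto
  have quad_form_M: "quad_form n M y = L * sq_norm n y - quad_form n F y" for y
    unfolding M_def bilin_form_diff by (simp add: quad_form_diag)
  have "det (mat n n (\<lambda>(i, j). M i j)) = 0"
  proof (rule ccontr)
    assume nonsingular: "det (mat n n (\<lambda>(i, j). M i j)) \<noteq> 0"
    have "0 \<le> quad_form n M y" for y
      using le_L[of y] unfolding quad_form_M by simp
    then obtain K where K: "K > 0" "\<And>y. sq_norm n y \<le> K * quad_form n M y"
      using psd_nonsingular_coercive[OF symM _ nonsingular] by blast
    have "L \<le> L - 1 / K"
      unfolding L_def
    proof (rule cSup_least)
      show "R \<noteq> {}" using x0 unfolding R_def by (auto intro!: exI[of _ x])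
      fix q assume "q \<in> R"
      then obtain y where q: "q = quad_form n F y / sq_norm n y" and "sq_norm n y \<noteq> 0"
        unfolding R_def by blast
      with sq_norm_nonneg[of n y] have y0: "sq_norm n y > 0" by simp
      have "quad_form n F y \<le> (L - 1 / K) * sq_norm n y"
        using K(2)[of y] \<open>K > 0\<close> unfolding quad_form_M by (simp add: field_simps)
      with q y0 show "q \<le> Sup R - 1 / K"
        unfolding L_def[symmetric] by (simp add: divide_le_eq)
    qed
    with \<open>K > 0\<close> show False by simp
  qed
  with \<open>t < L\<close> show ?thesis unfolding M_def by blast
qed

section \<open>Shifting a matrix by a constant\<close>

lemma poly_char_poly:
  "poly (char_poly (mat n n (\<lambda>(i, j). F i j))) \<mu> = det (mat n n (\<lambda>(i, j). (if i = j then \<mu> else 0) - F i j))"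
  unfolding char_poly_def by (rule poly_det_cong[of _ n]) (auto simp: char_poly_matrix_def)

lemma char_poly_nonzero: "char_poly (mat n n (\<lambda>(i, j). F i j)) \<noteq> (0 :: real poly)"
  using degree_monic_char_poly[of "mat n n (\<lambda>(i, j). F i j)" n] by auto

text \<open>Adding the row sums into column \<open>0\<close> and then clearing the constant \<open>c\<close> from the other
  columns factors \<open>M + c J\<close> through a triangular matrix with corner entry \<open>r + c n\<close>.\<close>

lemma mat_add_const_factor:
  fixes M :: "nat \<Rightarrow> nat \<Rightarrow> real"
  assumes "n > 0" and rows: "\<And>i. i < n \<Longrightarrow> (\<Sum>j<n. M i j) = r"
  shows "mat n n (\<lambda>(i, j). M i j + c) * mat n n (\<lambda>(i, j). of_bool (j = 0 \<or> i = j))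
       = mat n n (\<lambda>(i, j). if j = 0 then 1 else M i j)
         * mat n n (\<lambda>(i, j). if i = 0 then (if j = 0 then r + c * n else c) else of_bool (i = j))"
    (is "?D * ?W = ?G * ?T")
proof (rule eq_matI)
  fix i j assume "i < dim_row (?G * ?T)" "j < dim_col (?G * ?T)"
  then have i: "i < n" and j: "j < n" by auto
  have lhs: "(?D * ?W) $$ (i, j) = (\<Sum>k<n. (M i k + c) * of_bool (j = 0 \<or> k = j))"
    using i j by (simp add: scalar_prod_def lessThan_atLeast0)
  have rhs: "(?G * ?T) $$ (i, j) = (\<Sum>k<n. (if k = 0 then 1 else M i k)
      * (if k = 0 then (if j = 0 then r + c * n else c) else of_bool (k = j)))"
    using i j by (simp add: scalar_prod_def lessThan_atLeast0)
  show "(?D * ?W) $$ (i, j) = (?G * ?T) $$ (i, j)"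
  proof (cases "j = 0")
    case True
    then have "(?D * ?W) $$ (i, j) = r + c * n" unfolding lhs using rows[OF i] by (simp add: sum.distrib)
    moreover have "(?G * ?T) $$ (i, j) = r + c * n"
      unfolding rhs using True \<open>n > 0\<close> by (simp add: if_distrib cong: if_cong)
    ultimately show ?thesis by simp
  next
    case False
    have "(?G * ?T) $$ (i, j) = (\<Sum>k<n. (if k = 0 then c else 0) + (if k = j then M i k else 0))"
      unfolding rhs using False by (intro sum.cong) auto
    with False i j \<open>n > 0\<close> show ?thesis unfolding lhs by (simp add: sum.distrib)
  qed
qed auto

lemma det_add_const_mult_row_sum:
  fixes M :: "nat \<Rightarrow> nat \<Rightarrow> real"
  assumes "n > 0" and rows: "\<And>i. i < n \<Longrightarrow> (\<Sum>j<n. M i j) = r"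
  shows "det (mat n n (\<lambda>(i, j). M i j + c)) * r = det (mat n n (\<lambda>(i, j). M i j)) * (r + c * n)"
proof -
  define G where "G = mat n n (\<lambda>(i, j). if j = 0 then 1 else M i j)"
  have factor: "det (mat n n (\<lambda>(i, j). M i j + c)) = det G * (r + c * n)" for c
  proof -
    let ?W = "mat n n (\<lambda>(i, j). of_bool (j = 0 \<or> i = j)) :: real mat"
    let ?T = "mat n n (\<lambda>(i, j). if i = 0 then (if j = 0 then r + c * n else c) else of_bool (i = j)) :: real mat"
    have "det ?W = 1"
      by (subst det_lower_triangular[of n]) (auto simp: prod_list_diag_prod intro!: prod.neutral)
    moreover have "det ?T = r + c * n"
    proof -
      have "det ?T = (\<Prod>i = 0..<n. ?T $$ (i, i))"
        by (subst det_upper_triangular[of _ n]) (auto simp: prod_list_diag_prod)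
      also have "\<dots> = (\<Prod>i = 0..<n. if i = 0 then r + c * n else 1)"
        by (intro prod.cong) auto
      finally show ?thesis using \<open>n > 0\<close> by (simp add: prod.delta)
    qed
    moreover have "det (mat n n (\<lambda>(i, j). M i j + c)) * det ?W = det G * det ?T"
      using mat_add_const_factor[OF assms, where c = c] unfolding G_def
      by (subst (1 2) det_mult[of _ n, symmetric]) auto
    ultimately show ?thesis by simp
  qed
  show ?thesis using factor[of c] factor[of 0] by simp
qed

lemma char_poly_sub_const:
  fixes F :: "nat \<Rightarrow> nat \<Rightarrow> real"
  assumes "n > 0" and rows: "\<And>i. i < n \<Longrightarrow> (\<Sum>j<n. F i j) = s"
  shows "char_poly (mat n n (\<lambda>(i, j). F i j - (s - t) / n)) * [:- s, 1:]
       = char_poly (mat n n (\<lambda>(i, j). F i j)) * [:- t, 1:]"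
proof (rule poly_eq_poly_eq_iff[THEN iffD1, OF ext])
  fix \<mu> :: real
  define M where "M i j = (if i = j then \<mu> else 0) - F i j" for i j
  have "(\<Sum>j<n. M i j) = \<mu> - s" if "i < n" for i
    using rows[OF that] that by (simp add: M_def sum_subtractf)
  from det_add_const_mult_row_sum[OF \<open>n > 0\<close> this, where c = "(s - t) / n"] \<open>n > 0\<close>
  have det_eq: "det (mat n n (\<lambda>(i, j). M i j + (s - t) / n)) * (\<mu> - s) = det (mat n n (\<lambda>(i, j). M i j)) * (\<mu> - t)"
    by simp
  show "poly (char_poly (mat n n (\<lambda>(i, j). F i j - (s - t) / n)) * [:- s, 1:]) \<mu>
       = poly (char_poly (mat n n (\<lambda>(i, j). F i j)) * [:- t, 1:]) \<mu>"
    using det_eq by (simp add: poly_char_poly M_def algebra_simps)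
qed

lemma proots_char_poly_sub_const:
  fixes F :: "nat \<Rightarrow> nat \<Rightarrow> real"
  assumes "n > 0" and "\<And>i. i < n \<Longrightarrow> (\<Sum>j<n. F i j) = s"
  shows "add_mset s (proots (char_poly (mat n n (\<lambda>(i, j). F i j - (s - t) / n))))
       = add_mset t (proots (char_poly (mat n n (\<lambda>(i, j). F i j))))"
proof -
  have "proots (char_poly (mat n n (\<lambda>(i, j). F i j - (s - t) / n)) * [:- s, 1:])
      = proots (char_poly (mat n n (\<lambda>(i, j). F i j)) * [:- t, 1:])"
    by (rule arg_cong[OF char_poly_sub_const[OF assms]])
  then show ?thesis
    by (simp add: proots_mult char_poly_nonzero del: mult_pCons_left mult_pCons_right)
qed

lemma in_diff_single_if_add_mset_eq:
  assumes "add_mset s Q = add_mset t P" "\<mu> \<in># Q" "\<mu> \<noteq> t"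
  shows "\<mu> \<in># P - {#s#}"
proof -
  have "count (add_mset s Q) \<mu> = count (add_mset t P) \<mu>" using assms(1) by simp
  with assms(3) have "count (P - {#s#}) \<mu> = count Q \<mu>" by auto
  moreover have "count Q \<mu> > 0" using assms(2) by simp
  ultimately show ?thesis by (metis count_greater_zero_iff)
qed

lemma quad_form_sub_const:
  "quad_form n (\<lambda>i j. F i j - c) y = quad_form n F y - c * (\<Sum>i<n. y i)\<^sup>2"
  unfolding bilin_form_def
  by (simp add: algebra_simps sum_subtractf sum_distrib_left power2_eq_square sum_product)

lemma eigenvalue_gt_of_quad_form_gt_sum_zero:
  fixes F :: "nat \<Rightarrow> nat \<Rightarrow> real"
  assumes "n > 0" and sym: "\<And>i j. i < n \<Longrightarrow> j < n \<Longrightarrow> F i j = F j i"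
    and rows: "\<And>i. i < n \<Longrightarrow> (\<Sum>j<n. F i j) = s"
    and sum_zero: "(\<Sum>i<n. y i) = 0" and gt: "quad_form n F y > t * sq_norm n y"
  shows "\<exists>\<mu>>t. \<mu> \<in># proots (char_poly (mat n n (\<lambda>(i, j). F i j))) - {#s#}"
proof -
  define F' where "F' i j = F i j - (s - t) / n" for i j
  have "quad_form n F' y > t * sq_norm n y"
    using gt quad_form_sub_const[of n F "(s - t) / n" y] unfolding F'_def sum_zero by simp
  moreover have "\<And>i j. i < n \<Longrightarrow> j < n \<Longrightarrow> F' i j = F' j i" using sym by (simp add: F'_def)
  ultimately obtain \<mu> where "\<mu> > t" and "det (mat n n (\<lambda>(i, j). (if i = j then \<mu> else 0) - F' i j)) = 0"
    using eigenvalue_gt_of_quad_form_gt by blast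
  then have "\<mu> \<in># proots (char_poly (mat n n (\<lambda>(i, j). F' i j)))"
    by (simp add: poly_char_poly char_poly_nonzero)
  with \<open>\<mu> > t\<close> show ?thesis
    using in_diff_single_if_add_mset_eq[OF proots_char_poly_sub_const[OF \<open>n > 0\<close> rows]]
    unfolding F'_def by force
qed

section \<open>The second eigenvalue of a regular graph\<close>

lemma rev_sorted_list_of_multiset_nth_1:
  fixes P :: "'a :: linorder multiset"
  assumes "s \<in># P" and le_s: "\<And>x. x \<in># P \<Longrightarrow> x \<le> s" and "P - {#s#} \<noteq> {#}"
  shows "rev (sorted_list_of_multiset P) ! 1 = Max_mset (P - {#s#})"
proof -
  define l where "l = sorted_list_of_multiset (P - {#s#})"
  have "l \<noteq> []" using assms(3) unfolding l_def by (metis mset_sorted_list_of_multiset mset.simps(1))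
  have "\<forall>x\<in>set l. x \<le> s" using le_s unfolding l_def by (auto dest: in_diffD)
  then have "sorted (l @ [s])" by (simp add: sorted_append l_def)
  moreover have "mset (l @ [s]) = P" using assms(1) by (simp add: l_def)
  ultimately have "sorted_list_of_multiset P = l @ [s]"
    by (metis sorted_list_of_multiset_mset sorted_sort_id)
  then have "rev (sorted_list_of_multiset P) ! 1 = last l"
    using \<open>l \<noteq> []\<close> by (simp add: last_conv_nth rev_nth)
  also have "\<dots> = Max (set l)"
  proof (rule Max_eqI[symmetric])
    fix x assume "x \<in> set l"
    then obtain i where "i < length l" "x = l ! i" by (auto simp: in_set_conv_nth)
    moreover have "sorted l" by (simp add: l_def)
    ultimately show "x \<le> last l"
      using \<open>l \<noteq> []\<close> by (simp add: last_conv_nth sorted_nth_mono)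
  qed (use \<open>l \<noteq> []\<close> in auto)
  finally show ?thesis by (simp add: l_def)
qed

lemma eigenvalue_le_row_sum:
  fixes F :: "nat \<Rightarrow> nat \<Rightarrow> real"
  assumes nonneg: "\<And>i j. 0 \<le> F i j" and rows: "\<And>i. i < n \<Longrightarrow> (\<Sum>j<n. F i j) = s"
    and "det (mat n n (\<lambda>(i, j). (if i = j then \<mu> else 0) - F i j)) = 0"
  shows "\<mu> \<le> s"
proof -
  let ?M = "mat n n (\<lambda>(i, j). (if i = j then \<mu> else 0) - F i j)"
  obtain v where v: "v \<in> carrier_vec n" "v \<noteq> 0\<^sub>v n" "?M *\<^sub>v v = 0\<^sub>v n"
    using assms(3) det_0_iff_vec_prod_zero_field[of ?M n] by auto
  have eigen: "\<mu> * v $ i = (\<Sum>j<n. F i j * v $ j)" if "i < n" for i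
  proof -
    have "0 = (\<Sum>j<n. ((if i = j then \<mu> else 0) - F i j) * v $ j)"
      using arg_cong[OF v(3), of "\<lambda>w. w $ i"] v(1) that
      by (simp add: scalar_prod_def lessThan_atLeast0)
    also have "\<dots> = \<mu> * v $ i - (\<Sum>j<n. F i j * v $ j)"
      using that by (simp add: left_diff_distrib sum_subtractf if_distrib[of "\<lambda>x. x * _"] cong: if_cong)
    finally show ?thesis by simp
  qed
  define m where "m = Max ((\<lambda>j. \<bar>v $ j\<bar>) ` {..<n})"
  have "n \<noteq> 0"
    using v(1,2) by (auto intro: eq_vecI)
  then have "m \<in> (\<lambda>j. \<bar>v $ j\<bar>) ` {..<n}"
    unfolding m_def by (intro Max_in) auto
  then obtain i where i: "i < n" "\<bar>v $ i\<bar> = m" by auto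
  have le_m: "\<bar>v $ j\<bar> \<le> m" if "j < n" for j
    unfolding m_def using that by (intro Max_ge) auto
  have "m > 0"
  proof (rule ccontr)
    assume "\<not> m > 0"
    with le_m have "v $ j = 0" if "j < n" for j
      using that by (meson abs_le_zero_iff not_less order_trans)
    with v(1) have "v = 0\<^sub>v n" by (intro eq_vecI) auto
    with v(2) show False by simp
  qed
  have "\<bar>\<mu>\<bar> * m = \<bar>\<Sum>j<n. F i j * v $ j\<bar>" using eigen[OF i(1)] i(2) by (metis abs_mult)
  also have "\<dots> \<le> (\<Sum>j<n. F i j * m)"
    using nonneg le_m by (intro order_trans[OF sum_abs] sum_mono) (simp add: abs_mult mult_left_mono)
  also have "\<dots> = s * m" using rows[OF i(1)] by (simp flip: sum_distrib_right)
  finally show ?thesis using \<open>m > 0\<close> by simp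
qed

lemma row_sum_is_eigenvalue:
  fixes F :: "nat \<Rightarrow> nat \<Rightarrow> real"
  assumes "n > 0" and rows: "\<And>i. i < n \<Longrightarrow> (\<Sum>j<n. F i j) = s"
  shows "det (mat n n (\<lambda>(i, j). (if i = j then s else 0) - F i j)) = 0"
proof -
  let ?M = "mat n n (\<lambda>(i, j). (if i = j then s else 0) - F i j)"
  let ?one = "vec n (\<lambda>_. 1) :: real vec"
  have "?M *\<^sub>v ?one = 0\<^sub>v n"
    using rows by (intro eq_vecI) (simp_all add: scalar_prod_def lessThan_atLeast0 sum_subtractf)
  moreover have "?one \<noteq> 0\<^sub>v n" using \<open>n > 0\<close> by (metis index_vec index_zero_vec(1) zero_neq_one)
  moreover have "?one \<in> carrier_vec n" by simp
  ultimately show ?thesis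
    using det_0_iff_vec_prod_zero_field[of ?M n] by fastforce
qed

definition adj_entry :: "(nat \<Rightarrow> nat \<Rightarrow> bool) \<Rightarrow> nat \<Rightarrow> nat \<Rightarrow> real" where
  "adj_entry E i j = (if E i j then 1 else 0)"

lemma adj_matrix_eq: "adj_matrix n E = mat n n (\<lambda>(i, j). adj_entry E i j)"
  unfolding adj_matrix_def adj_entry_def by simp

lemma adj_entry_commute: "simple_graph n E \<Longrightarrow> adj_entry E i j = adj_entry E j i"
  unfolding simple_graph_def adj_entry_def by metis

lemma sum_adj_entry: "finite A \<Longrightarrow> (\<Sum>j\<in>A. adj_entry E i j) = card {j \<in> A. E i j}"
  unfolding adj_entry_def by (simp add: sum.If_cases Int_def)

lemma sum_adj_entry_row:
  assumes "regular_graph n E s" "i < n"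
  shows "(\<Sum>j<n. adj_entry E i j) = s"
proof -
  have "{j \<in> {..<n}. E i j} = {w. w < n \<and> E i w}" by auto
  with assms show ?thesis unfolding regular_graph_def by (simp add: sum_adj_entry)
qed

lemma regular_graph_card_ge_2:
  assumes "regular_graph n E s" "s > 0" "n > 0"
  shows "n \<ge> 2"
proof -
  have "{w. w < n \<and> E 0 w} \<noteq> {}"
    using assms unfolding regular_graph_def by (metis card.empty less_irrefl)
  then obtain w where "w < n" "E 0 w" by blast
  moreover have "\<not> E 0 0" using assms(1) unfolding regular_graph_def simple_graph_def by blast
  ultimately show ?thesis by (cases "w = 0") auto
qed

lemma proots_adj_le_degree:
  assumes "regular_graph n E s" "x \<in># proots (char_poly (adj_matrix n E))"
  shows "x \<le> s"
  using assms(2) eigenvalue_le_row_sum[of "adj_entry E" n "real s" x] sum_adj_entry_row[OF assms(1)]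
  unfolding adj_matrix_eq by (simp add: poly_char_poly char_poly_nonzero adj_entry_def)

text \<open>A nontrivial root exists (so that the list index in \<open>lambda2\<close> is meaningful) because the
  Rayleigh quotient of \<open>e\<^sub>0 - e\<^sub>1\<close> exceeds \<open>-K - 1\<close>, where \<open>K\<close> is the sum of the entries.\<close>

lemma lambda2_eq_Max_mset:
  assumes reg: "regular_graph n E s" and "n \<ge> 2"
  defines "P \<equiv> proots (char_poly (adj_matrix n E))"
  shows "P - {#real s#} \<noteq> {#}" and "lambda2 n E = Max_mset (P - {#real s#})"
proof -
  have sym: "\<And>i j. adj_entry E i j = adj_entry E j i"
    using reg unfolding regular_graph_def by (blast intro: adj_entry_commute)
  note rows = sum_adj_entry_row[OF reg]
  have "n > 0" using \<open>n \<ge> 2\<close> by simp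
  define K where "K = (\<Sum>i<n. \<Sum>j<n. \<bar>adj_entry E i j\<bar>)"
  define y :: "nat \<Rightarrow> real" where "y i = of_bool (i = 0) - of_bool (i = 1)" for i
  have "(\<Sum>i<n. y i) = 0" unfolding y_def using \<open>n \<ge> 2\<close> by (simp add: sum_subtractf)
  moreover have "quad_form n (adj_entry E) y > (- K - 1) * sq_norm n y"
  proof -
    have "1 \<le> sq_norm n y" using sq_norm_ge_component[of 0 n y] \<open>n > 0\<close> by (simp add: y_def)
    with abs_quad_form_le[of n "adj_entry E" y] show ?thesis unfolding K_def by (simp add: algebra_simps)
  qed
  ultimately obtain \<mu> where "\<mu> \<in># P - {#real s#}"
    using eigenvalue_gt_of_quad_form_gt_sum_zero[OF \<open>n > 0\<close> sym rows] unfolding P_def adj_matrix_eq by blast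
  then show nonempty: "P - {#real s#} \<noteq> {#}" by auto
  have "real s \<in># P"
    using row_sum_is_eigenvalue[OF \<open>n > 0\<close> rows]
    unfolding P_def adj_matrix_eq by (simp add: poly_char_poly char_poly_nonzero)
  moreover have "x \<le> real s" if "x \<in># P" for x
    using that proots_adj_le_degree[OF reg] unfolding P_def by blast
  ultimately show "lambda2 n E = Max_mset (P - {#real s#})"
    using rev_sorted_list_of_multiset_nth_1[OF _ _ nonempty]
    unfolding lambda2_def adj_eigenvalues_desc_def P_def by blast
qed

lemma lambda2_le_degree:
  assumes "regular_graph n E s" "n \<ge> 2"
  shows "lambda2 n E \<le> s"
proof -
  have "lambda2 n E \<in># proots (char_poly (adj_matrix n E)) - {#real s#}"
    unfolding lambda2_eq_Max_mset(2)[OF assms] using lambda2_eq_Max_mset(1)[OF assms] by (rule Max_in_mset)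
  then have "lambda2 n E \<in># proots (char_poly (adj_matrix n E))" by (rule in_diffD)
  then show ?thesis by (rule proots_adj_le_degree[OF assms(1)])
qed

lemma quad_form_adj_le_lambda2:
  assumes reg: "regular_graph n E s" and "n \<ge> 2" and sum_zero: "(\<Sum>i<n. y i) = 0"
  shows "quad_form n (adj_entry E) y \<le> lambda2 n E * sq_norm n y"
proof (rule ccontr)
  assume "\<not> ?thesis"
  then have gt: "quad_form n (adj_entry E) y > lambda2 n E * sq_norm n y" by simp
  have sym: "\<And>i j. adj_entry E i j = adj_entry E j i"
    using reg unfolding regular_graph_def by (blast intro: adj_entry_commute)
  from \<open>n \<ge> 2\<close> have "n > 0" by simp
  obtain \<mu> where "\<mu> > lambda2 n E" "\<mu> \<in># proots (char_poly (adj_matrix n E)) - {#real s#}"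
    using eigenvalue_gt_of_quad_form_gt_sum_zero[OF \<open>n > 0\<close> sym sum_adj_entry_row[OF reg] sum_zero gt]
    unfolding adj_matrix_eq by blast
  moreover have "\<mu> \<le> lambda2 n E"
    using calculation(2) lambda2_eq_Max_mset[OF reg \<open>n \<ge> 2\<close>] by simp
  ultimately show False by simp
qed

lemma quad_form_translate:
  assumes sym: "\<And>i j. F i j = F j i" and rows: "\<And>i. i < n \<Longrightarrow> (\<Sum>j<n. F i j) = s"
  shows "quad_form n F (\<lambda>i. y i - p) = quad_form n F y - 2 * p * s * (\<Sum>i<n. y i) + p\<^sup>2 * s * n"
proof -
  have col: "(\<Sum>i<n. \<Sum>j<n. y i * F i j) = s * (\<Sum>i<n. y i)"
    using rows by (simp add: sum_distrib_left[symmetric] sum_distrib_right mult.commute)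
  have row: "(\<Sum>i<n. \<Sum>j<n. F i j * y j) = s * (\<Sum>i<n. y i)"
    using col by (subst sum.swap) (simp add: sym mult.commute)
  have "quad_form n F (\<lambda>i. y i - p) = (\<Sum>i<n. \<Sum>j<n. y i * F i j * y j - p * (y i * F i j)
      - p * (F i j * y j) + p\<^sup>2 * F i j)"
    unfolding bilin_form_def by (intro sum.cong refl) (simp add: algebra_simps power2_eq_square)
  also have "\<dots> = quad_form n F y - p * (\<Sum>i<n. \<Sum>j<n. y i * F i j)
      - p * (\<Sum>i<n. \<Sum>j<n. F i j * y j) + p\<^sup>2 * (\<Sum>i<n. \<Sum>j<n. F i j)"
    unfolding bilin_form_def by (simp only: sum.distrib sum_subtractf sum_distrib_left)
  finally show ?thesis unfolding col row using rows by simp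
qed

lemma quad_form_indicator:
  assumes "S \<subseteq> {..<n}"
  shows "quad_form n F (\<lambda>i. of_bool (i \<in> S)) = (\<Sum>i\<in>S. \<Sum>j\<in>S. F i j)"
proof -
  have "S \<subseteq> {..<n}" "finite {..<n}" using assms by auto
  then show ?thesis
    unfolding bilin_form_def by (intro sum.mono_neutral_cong_right) auto
qed

section \<open>Edge boundaries\<close>

definition boundary_degree :: "nat \<Rightarrow> (nat \<Rightarrow> nat \<Rightarrow> bool) \<Rightarrow> nat set \<Rightarrow> nat \<Rightarrow> nat" where
  "boundary_degree n E S v = card {w. w < n \<and> w \<notin> S \<and> E v w}"

lemma card_delta_set_inter_delta_vertex:
  assumes "simple_graph n E" and "S \<subseteq> {0..<n}" and "v \<in> S"
  shows "card (delta_set n E S \<inter> delta_vertex n E v) = boundary_degree n E S v"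
proof -
  have sym: "\<And>u w. E u w \<Longrightarrow> E w u" and "v < n"
    using assms unfolding simple_graph_def by auto
  have "delta_set n E S \<inter> delta_vertex n E v = (\<lambda>w. {v, w}) ` {w. w < n \<and> w \<notin> S \<and> E v w}"
  proof (intro equalityI subsetI)
    fix e assume e: "e \<in> delta_set n E S \<inter> delta_vertex n E v"
    then obtain u w where uw: "e = {u, w}" "u \<in> S" "w < n" "w \<notin> S" "v \<in> e"
      unfolding delta_set_def delta_vertex_def by auto
    with \<open>v \<in> S\<close> have "e = {v, w}" by auto
    moreover obtain u' w' where "e = {u', w'}" "E u' w'"
      using e unfolding delta_set_def graph_edges_def by blast
    ultimately have "E v w" using sym by (auto simp: doubleton_eq_iff)
    with uw \<open>e = {v, w}\<close> show "e \<in> (\<lambda>w. {v, w}) ` {w. w < n \<and> w \<notin> S \<and> E v w}"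
      by blast
  next
    fix e assume "e \<in> (\<lambda>w. {v, w}) ` {w. w < n \<and> w \<notin> S \<and> E v w}"
    then obtain w where "e = {v, w}" "w < n" "w \<notin> S" "E v w" by blast
    moreover have "e \<in> graph_edges n E"
      unfolding graph_edges_def using calculation \<open>v < n\<close> by blast
    ultimately show "e \<in> delta_set n E S \<inter> delta_vertex n E v"
      unfolding delta_set_def delta_vertex_def using \<open>v \<in> S\<close> by auto
  qed
  moreover have "inj_on (\<lambda>w. {v, w}) {w. w < n \<and> w \<notin> S \<and> E v w}"
    using \<open>v \<in> S\<close> by (auto simp: inj_on_def doubleton_eq_iff)
  ultimately show ?thesis unfolding boundary_degree_def by (simp add: card_image)
qed

lemma boundary_degree_le_degree:
  assumes "regular_graph n E s" and "v < n"
  shows "boundary_degree n E S v \<le> s"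
proof -
  have "boundary_degree n E S v \<le> card {w. w < n \<and> E v w}"
    unfolding boundary_degree_def by (intro card_mono) auto
  with assms show ?thesis unfolding regular_graph_def by auto
qed

lemma sum_adj_entry_inside:
  assumes "regular_graph n E s" and "S \<subseteq> {0..<n}" and "i \<in> S"
  shows "(\<Sum>j\<in>S. adj_entry E i j) = s - real (boundary_degree n E S i)"
proof -
  have "finite S" using assms(2) finite_subset by blast
  have "{w. w < n \<and> E i w} = {j \<in> S. E i j} \<union> {w. w < n \<and> w \<notin> S \<and> E i w}"
    using assms(2) by auto
  then have "card {w. w < n \<and> E i w} = card {j \<in> S. E i j} + boundary_degree n E S i"
    using \<open>finite S\<close> unfolding boundary_degree_def by (simp add: card_Un_disjoint disjoint_iff)
  moreover have "card {w. w < n \<and> E i w} = s"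
    using assms unfolding regular_graph_def by auto
  ultimately show ?thesis using \<open>finite S\<close> by (simp add: sum_adj_entry)
qed

lemma sum_boundary_degree_ge:
  assumes reg: "regular_graph n E s" and "n \<ge> 2" and S: "S \<subseteq> {0..<n}"
  shows "(s - lambda2 n E) * (card S * (1 - card S / n)) \<le> (\<Sum>v\<in>S. real (boundary_degree n E S v))"
proof -
  define k where "k = real (card S)"
  define p where "p = k / n"
  define D where "D = (\<Sum>v\<in>S. real (boundary_degree n E S v))"
  define \<chi> :: "nat \<Rightarrow> real" where "\<chi> i = of_bool (i \<in> S)" for i
  have "n > 0" using \<open>n \<ge> 2\<close> by simp
  have sum_\<chi>: "(\<Sum>i<n. \<chi> i) = k"
    unfolding \<chi>_def k_def using S by (simp add: sum.If_cases lessThan_atLeast0 Int_absorb1)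
  have "n * p = k" using \<open>n > 0\<close> by (simp add: p_def)
  then have sum_zero: "(\<Sum>i<n. \<chi> i - p) = 0" by (simp add: sum_subtractf sum_\<chi>)
  have "sq_norm n (\<lambda>i. \<chi> i - p) = (\<Sum>i<n. \<chi> i - 2 * p * \<chi> i + p\<^sup>2)"
    unfolding sq_norm_def \<chi>_def by (intro sum.cong) (auto simp: power2_eq_square algebra_simps)
  also have "\<dots> = k - 2 * p * k + n * p\<^sup>2"
    by (simp add: sum.distrib sum_subtractf sum_\<chi> flip: sum_distrib_left)
  also have "\<dots> = k - k\<^sup>2 / n"
    using \<open>n > 0\<close> by (simp add: p_def field_simps power2_eq_square)
  finally have norm: "sq_norm n (\<lambda>i. \<chi> i - p) = k - k\<^sup>2 / n" .
  have sym: "\<And>i j. adj_entry E i j = adj_entry E j i"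
    using reg unfolding regular_graph_def by (blast intro: adj_entry_commute)
  have "quad_form n (adj_entry E) \<chi> = (\<Sum>i\<in>S. \<Sum>j\<in>S. adj_entry E i j)"
    unfolding \<chi>_def using S by (intro quad_form_indicator) auto
  also have "\<dots> = (\<Sum>i\<in>S. s - real (boundary_degree n E S i))"
    by (intro sum.cong refl sum_adj_entry_inside[OF reg S])
  finally have "quad_form n (adj_entry E) \<chi> = s * k - D"
    by (simp add: sum_subtractf D_def k_def)
  then have "quad_form n (adj_entry E) (\<lambda>i. \<chi> i - p) = s * k - D - s * k\<^sup>2 / n"
    using \<open>n > 0\<close> by (simp add: quad_form_translate[OF sym sum_adj_entry_row[OF reg]] sum_\<chi> p_def)
      (simp add: field_simps power2_eq_square)
  with quad_form_adj_le_lambda2[OF reg \<open>n \<ge> 2\<close> sum_zero] norm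
  show ?thesis
    unfolding D_def[symmetric] k_def[symmetric] by (simp add: algebra_simps power2_eq_square diff_divide_distrib)
qed

lemma sum_le_threshold_card:
  fixes d :: "'a \<Rightarrow> real"
  assumes "finite S" and "\<And>v. v \<in> S \<Longrightarrow> d v \<le> s"
  shows "(\<Sum>v\<in>S. d v) \<le> (s - b) * card S + b * card {v \<in> S. s - b \<le> d v}"
proof -
  let ?A = "{v \<in> S. s - b \<le> d v}"
  have "(\<Sum>v\<in>S. d v) = (\<Sum>v\<in>?A. d v) + (\<Sum>v\<in>S - ?A. d v)"
    using assms(1) by (simp add: sum.subset_diff[of ?A S])
  also have "\<dots> \<le> (\<Sum>v\<in>?A. s) + (\<Sum>v\<in>S - ?A. s - b)"
    using assms(2) by (intro add_mono sum_mono) auto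
  also have "\<dots> = (s - b) * card S + b * card ?A"
  proof -
    have "card S = card ?A + card (S - ?A)"
      using assms(1) by (simp add: card_Diff_subset card_mono)
    then show ?thesis by (simp add: algebra_simps)
  qed
  finally show ?thesis .
qed

theorem mainTheorem7:
  fixes n s :: nat and E :: "nat \<Rightarrow> nat \<Rightarrow> bool" and S :: "nat set" and \<alpha> b :: real
  assumes "regular_graph n E s"
    and "0 < \<alpha>"
    and "S \<subseteq> {0..<n}"
    and "real (card S) \<le> \<alpha> * real n"
    and "0 < b" and "b \<le> real s"
  shows "let A = {v \<in> S. real (card (delta_set n E S \<inter> delta_vertex n E v)) \<ge> real s - b};
             \<beta> = ((b - lambda2 n E) - \<alpha> * (real s - lambda2 n E)) / b
         in real (card A) \<ge> \<beta> * real (card S)"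
proof (cases "S = {}")
  case False
  note reg = assms(1) and S = assms(3)
  define k where "k = real (card S)"
  define A where "A = {v \<in> S. real s - b \<le> real (boundary_degree n E S v)}"
  have "n > 0" using False S by auto
  then have "n \<ge> 2" using regular_graph_card_ge_2[OF reg] assms(5,6) by simp
  have "(s - lambda2 n E) * (k * (1 - \<alpha>)) \<le> (s - lambda2 n E) * (k * (1 - k / n))"
    using lambda2_le_degree[OF reg \<open>n \<ge> 2\<close>] assms(4) \<open>n > 0\<close>
    by (intro mult_left_mono) (auto simp: k_def field_simps)
  also have "\<dots> \<le> (\<Sum>v\<in>S. real (boundary_degree n E S v))"
    unfolding k_def by (rule sum_boundary_degree_ge[OF reg \<open>n \<ge> 2\<close> S])
  also have "\<dots> \<le> (s - b) * k + b * card A"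
    unfolding k_def A_def using S finite_subset boundary_degree_le_degree[OF reg]
    by (intro sum_le_threshold_card) auto
  finally have "(s - lambda2 n E) * (k * (1 - \<alpha>)) \<le> (s - b) * k + b * card A" .
  moreover have "A = {v \<in> S. real (card (delta_set n E S \<inter> delta_vertex n E v)) \<ge> real s - b}"
    using card_delta_set_inter_delta_vertex[OF _ S] reg unfolding A_def regular_graph_def by auto
  ultimately show ?thesis
    using \<open>b > 0\<close> unfolding Let_def k_def by (simp add: field_simps)
qed simp

end
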